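(* Consider a Galton–Watson branching process with offspring distribution $D=\{c_i\}_{i=0}^d$ and branching factor $b>1$, each node holding an answer independently with probability $1/n$, and let $\lambda_i=\phi_{i-1}-\phi_i$ as defined in the context. Then there exist levels $1\le \ell^1\le \ell^*$ such that: (1) $\{\lambda_i\}$ is single-peaked, peaking at $\ell^*$: for all $i\le \ell^*$, $\lambda_{i-1}\le\lambda_i$, and for all $j\ge\ell^*$, $\lambda_j>\lambda_{j+1}$; (2) there exists a constant $\rho>1$ such that $\lambda_{i+1}\ge\rho\,\lambda_i$ for all $i<\ell^1$; (3) $\lambda_{\ell^1}=\Omega(1)$, and consequently $\ell^*-\ell^1=O(1)$; (4) there exists a constant $\gamma>1$ such that $\sum_{j\ge i}\lambda_j\le\gamma\,\lambda_i$ for all $i\ge\ell^*+2$.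
   Context: Branching process: starting from the root (level $0$) of an infinite $d$-ary tree, each node independently samples a number of children $C(v)\sim D$ (where $c_i$ is the probability of $i$ children) and connects to $C(v)$ of its $d$ children chosen uniformly at random; $b=\sum_i ic_i$. Each non-root node independently holds an answer with probability $p=1/n$. Let $t(x)=\sum_{j=0}^d c_j x^j(1-\frac1n)^j$, $\phi_0=1$ and $\phi_i=t(\phi_{i-1})$ for $i\ge1$; $\phi_i$ is the probability that no active node in levels $1,\dots,i$ holds an answer, and $\lambda_i=\phi_{i-1}-\phi_i$ ($i\ge1$) is the probability that the first (lowest-level) answer lies at level $i$. The offspring distribution (hence $b$ and $d$) is fixed while $n$ is allowed to grow; "constant", $\Omega(1)$ and $O(1)$ mean bounds independent of $n$. *)

theory Defs
  imports "HOL-Analysis.Analysis"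
begin

text \<open>Offspring distribution: c i = probability of i children, i = 0..d.
  Answer probability p = 1/n.\<close>

definition branching :: "nat \<Rightarrow> (nat \<Rightarrow> real) \<Rightarrow> real" where
  "branching d c = (\<Sum>i\<le>d. real i * c i)"

definition tfun :: "nat \<Rightarrow> (nat \<Rightarrow> real) \<Rightarrow> nat \<Rightarrow> real \<Rightarrow> real" where
  "tfun d c n x = (\<Sum>j\<le>d. c j * x ^ j * (1 - 1 / real n) ^ j)"

definition phi :: "nat \<Rightarrow> (nat \<Rightarrow> real) \<Rightarrow> nat \<Rightarrow> nat \<Rightarrow> real" where
  "phi d c n i = (tfun d c n ^^ i) 1"

text \<open>lambda_i = phi_(i-1) - phi_i, meaningful for i >= 1 (at i = 0 it evaluates to 0).\<close>
definition lam :: "nat \<Rightarrow> (nat \<Rightarrow> real) \<Rightarrow> nat \<Rightarrow> nat \<Rightarrow> real" where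
  "lam d c n i = phi d c n (i - 1) - phi d c n i"

end

theory Submission
  imports Defs
begin

text \<open>
  The function \<open>t\<close> is a polynomial with nonnegative coefficients, so
  \<open>t y - t x = s(x, y) (y - x)\<close> with a secant slope \<open>s\<close> that is increasing in both arguments.
  Hence \<open>\<lambda>\<^sub>i\<^sub>+\<^sub>1 = s(\<phi>\<^sub>i, \<phi>\<^sub>i\<^sub>-\<^sub>1) \<lambda>\<^sub>i\<close>, and as \<open>\<phi>\<close> decreases
  the ratios \<open>\<lambda>\<^sub>i\<^sub>+\<^sub>1 / \<lambda>\<^sub>i\<close> decrease: \<open>\<lambda>\<close> is single-peaked at the first level
  \<open>\<ell>\<^sup>*\<close> where the ratio drops below \<open>1\<close>, which exists because the \<open>\<lambda>\<^sub>i\<close> sum to at most \<open>1\<close>.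

  Near \<open>1\<close> the diagonal slope \<open>s(A, A)\<close> is close to \<open>t'(1) \<approx> b > 1\<close> once \<open>n\<close> is large,
  so the ratios stay above \<open>\<rho> = (b + 1) / 2\<close> as long as \<open>\<phi> > A\<close>. At the first level
  \<open>\<ell>\<^sup>1\<close> with \<open>\<phi> \<le> A\<close>, the gap is \<open>\<phi> - t(\<phi>)\<close> for some \<open>\<phi> > A\<close>, which is bounded below
  by a constant \<open>\<kappa>\<close>. Between \<open>\<ell>\<^sup>1\<close> and \<open>\<ell>\<^sup>*\<close> the \<open>\<lambda>\<^sub>i\<close> only grow and they sum to at
  most \<open>1\<close>, so \<open>\<ell>\<^sup>* - \<ell>\<^sup>1 < 1 / \<kappa>\<close>. Two levels past the peak both arguments of the
  slope have dropped by at least the peak value of \<open>\<lambda>\<close>; since some \<open>c\<^sub>j\<close> with \<open>j \<ge> 2\<close> is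
  positive (as \<open>b > 1\<close>), this lowers the ratio by a constant, and the tail is dominated by a
  geometric series.
\<close>


definition pgf :: "nat \<Rightarrow> (nat \<Rightarrow> real) \<Rightarrow> real \<Rightarrow> real" where
  "pgf d a x = (\<Sum>j\<le>d. a j * x ^ j)"

definition secant :: "nat \<Rightarrow> (nat \<Rightarrow> real) \<Rightarrow> real \<Rightarrow> real \<Rightarrow> real" where
  "secant d a x y = (\<Sum>j\<le>d. a j * (\<Sum>i<j. x ^ (j - Suc i) * y ^ i))"

lemma pgf_diff: "pgf d a y - pgf d a x = secant d a x y * (y - x)"
proof -
  have "pgf d a y - pgf d a x = (\<Sum>j\<le>d. a j * (y ^ j - x ^ j))"
    unfolding pgf_def by (simp add: sum_subtractf algebra_simps)
  also have "\<dots> = (\<Sum>j\<le>d. a j * (\<Sum>i<j. x ^ (j - Suc i) * y ^ i) * (y - x))"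
    by (simp add: power_diff_sumr2 mult_ac)
  finally show ?thesis
    unfolding secant_def by (simp add: sum_distrib_right)
qed

lemma secant_diag: "secant d a x x = (\<Sum>j\<le>d. real j * a j * x ^ (j - 1))"
proof -
  have "(\<Sum>i<j. x ^ (j - Suc i) * x ^ i) = real j * x ^ (j - 1)" for j
    by (simp add: power_add[symmetric])
  then show ?thesis
    unfolding secant_def by (simp add: mult_ac)
qed

lemma secant_mono:
  assumes "\<forall>j\<le>d. 0 \<le> a j" "0 \<le> x'" "x' \<le> x" "0 \<le> y'" "y' \<le> y"
  shows "secant d a x' y' \<le> secant d a x y"
  unfolding secant_def using assms
  by (intro sum_mono mult_left_mono) (auto intro!: mult_mono power_mono)

text \<open>The single term \<open>x\<^sup>0 * y ^ (j - 1)\<close> of the \<open>j\<close>-th inner sum already accounts for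
  this increase.\<close>

lemma secant_increase_ge:
  assumes nonneg: "\<forall>j\<le>d. 0 \<le> a j" and "0 \<le> x'" "x' \<le> x" "0 \<le> y'" "y' \<le> y"
    and j: "1 \<le> j" "j \<le> d"
  shows "a j * (y ^ (j - 1) - y' ^ (j - 1)) \<le> secant d a x y - secant d a x' y'"
proof -
  define inner where "inner u v k = (\<Sum>i<k. u ^ (k - Suc i) * v ^ i)" for u v :: real and k
  define D where "D k i = x ^ (k - Suc i) * y ^ i - x' ^ (k - Suc i) * y' ^ i" for k i
  have D_nonneg: "0 \<le> D k i" for k i
    unfolding D_def using assms by (auto intro!: mult_mono power_mono)
  have inner_diff: "inner x y k - inner x' y' k = (\<Sum>i<k. D k i)" for k
    unfolding inner_def D_def by (simp add: sum_subtractf)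
  have "y ^ (j - 1) - y' ^ (j - 1) = D j (j - 1)"
    unfolding D_def using j by simp
  also have "\<dots> \<le> inner x y j - inner x' y' j"
    unfolding inner_diff using j D_nonneg by (intro member_le_sum) auto
  finally have "a j * (y ^ (j - 1) - y' ^ (j - 1)) \<le> a j * (inner x y j - inner x' y' j)"
    using nonneg j by (intro mult_left_mono) auto
  also have "\<dots> \<le> (\<Sum>k\<le>d. a k * (inner x y k - inner x' y' k))"
    using nonneg j D_nonneg
    by (intro member_le_sum) (auto simp: inner_diff intro!: mult_nonneg_nonneg sum_nonneg)
  also have "\<dots> = secant d a x y - secant d a x' y'"
    unfolding secant_def inner_def by (simp add: sum_subtractf algebra_simps)
  finally show ?thesis .
qed

lemma secant_ge_coeff:
  assumes "\<forall>j\<le>d. 0 \<le> a j" "0 \<le> x" "0 \<le> y" "1 \<le> j" "j \<le> d"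
  shows "a j * y ^ (j - 1) \<le> secant d a x y"
proof -
  have "y ^ (j - 1) \<le> (\<Sum>i<j. x ^ (j - Suc i) * y ^ i)"
    using member_le_sum[of "j - 1" "{..<j}" "\<lambda>i. x ^ (j - Suc i) * y ^ i"] assms by auto
  then have "a j * y ^ (j - 1) \<le> a j * (\<Sum>i<j. x ^ (j - Suc i) * y ^ i)"
    using assms by (intro mult_left_mono) auto
  also have "\<dots> \<le> secant d a x y"
    unfolding secant_def using assms by (intro member_le_sum) (auto intro!: mult_nonneg_nonneg sum_nonneg)
  finally show ?thesis .
qed

lemma power_add_ge_add_power:
  fixes x y :: real
  assumes "0 \<le> x" "0 \<le> y" "1 \<le> m"
  shows "x ^ m + y ^ m \<le> (x + y) ^ m"
  using assms(3)
proof (induction m rule: dec_induct)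
  case base
  then show ?case by simp
next
  case (step m)
  have "x ^ Suc m + y ^ Suc m \<le> (x + y) * (x ^ m + y ^ m)"
    using assms by (simp add: algebra_simps)
  also have "\<dots> \<le> (x + y) * (x + y) ^ m"
    using step.IH assms by (intro mult_left_mono) auto
  finally show ?case by simp
qed

lemma suminf_le_geometric:
  fixes u :: "nat \<Rightarrow> real"
  assumes nonneg: "\<And>k. 0 \<le> u k" and step: "\<And>k. u (Suc k) \<le> r * u k"
    and r: "0 \<le> r" "r < 1"
  shows "summable u" "suminf u \<le> u 0 / (1 - r)"
proof -
  have dom: "u k \<le> r ^ k * u 0" for k
  proof (induction k)
    case (Suc k)
    have "u (Suc k) \<le> r * u k" by (rule step)
    also have "\<dots> \<le> r * (r ^ k * u 0)" using Suc r by (intro mult_left_mono) auto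
    finally show ?case by simp
  qed simp
  have "(\<lambda>k. r ^ k * u 0) sums (1 / (1 - r) * u 0)"
    using r by (intro sums_mult2 geometric_sums) auto
  then have geo: "(\<lambda>k. r ^ k * u 0) sums (u 0 / (1 - r))"
    by simp
  show "summable u"
    using dom nonneg by (intro summable_comparison_test'[OF sums_summable[OF geo]]) auto
  then show "suminf u \<le> u 0 / (1 - r)"
    using dom geo by (intro sums_le[OF _ summable_sums]) auto
qed

text \<open>For \<open>a = thinned c n\<close> (defined below), \<open>iter\<close>, \<open>gap\<close>, \<open>peak\<close> and \<open>first_below A\<close>
  are the paper's \<open>\<phi>\<^sub>i\<close>, \<open>\<lambda>\<^sub>i\<close>, \<open>\<ell>\<^sup>*\<close> and \<open>\<ell>\<^sup>1\<close>; \<open>ratio i\<close> is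
  \<open>\<lambda>\<^sub>i\<^sub>+\<^sub>1 / \<lambda>\<^sub>i\<close>.\<close>

locale defective_pgf_iteration =
  fixes d :: nat and a :: "nat \<Rightarrow> real" and j0 :: nat
  assumes coeff_nonneg: "\<forall>j\<le>d. 0 \<le> a j"
    and mass_lt1: "(\<Sum>j\<le>d. a j) < 1"
    and j0: "2 \<le> j0" "j0 \<le> d" "0 < a j0"
begin

abbreviation "f \<equiv> pgf d a"
abbreviation "slope \<equiv> secant d a"

definition iter :: "nat \<Rightarrow> real" where
  "iter i = (f ^^ i) 1"

definition gap :: "nat \<Rightarrow> real" where
  "gap i = iter (i - 1) - iter i"

definition ratio :: "nat \<Rightarrow> real" where
  "ratio i = slope (iter i) (iter (i - 1))"

lemma f_pos: "0 < x \<Longrightarrow> 0 < f x"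
proof -
  assume "0 < x"
  then have "0 < a j0 * x ^ j0" using j0 by simp
  also have "\<dots> \<le> f x"
    unfolding pgf_def using j0 coeff_nonneg \<open>0 < x\<close> by (intro member_le_sum) auto
  finally show ?thesis .
qed

lemma f_lt1: "0 \<le> x \<Longrightarrow> x \<le> 1 \<Longrightarrow> f x < 1"
proof -
  assume "0 \<le> x" "x \<le> 1"
  then have "f x \<le> (\<Sum>j\<le>d. a j)"
    unfolding pgf_def using coeff_nonneg
    by (intro sum_mono) (auto intro!: mult_left_le power_le_one)
  then show ?thesis using mass_lt1 by simp
qed

lemma iter_0 [simp]: "iter 0 = 1" and iter_Suc: "iter (Suc i) = f (iter i)"
  by (simp_all add: iter_def)

lemma iter_pos: "0 < iter i" and iter_le1: "iter i \<le> 1"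
  by (induction i) (auto simp: iter_Suc f_pos less_imp_le f_lt1)

lemma gap_Suc_eq: "gap (Suc i) = iter i - iter (Suc i)"
  by (simp add: gap_def)

lemma gap_Suc_ratio: "1 \<le> i \<Longrightarrow> gap (Suc i) = ratio i * gap i"
  using pgf_diff[of d a "iter (i - 1)" "iter i"]
  by (cases i) (simp_all add: gap_def ratio_def iter_Suc)

lemma ratio_pos: "0 < ratio i"
proof -
  have "0 < a j0 * iter (i - 1) ^ (j0 - 1)"
    using j0 iter_pos by simp
  also have "\<dots> \<le> ratio i"
    unfolding ratio_def using coeff_nonneg iter_pos j0
    by (intro secant_ge_coeff) (auto intro: less_imp_le)
  finally show ?thesis .
qed

lemma gap_pos: "1 \<le> i \<Longrightarrow> 0 < gap i"
proof (induction i rule: dec_induct)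
  case base
  show ?case using f_lt1[of 1] by (simp add: gap_def iter_Suc)
next
  case (step i)
  then show ?case using gap_Suc_ratio ratio_pos by simp
qed

lemma decseq_iter: "decseq iter"
  unfolding decseq_Suc_iff using gap_pos[of "Suc _"] by (simp add: gap_Suc_eq less_imp_le)

lemma decseq_ratio: "decseq ratio"
  unfolding decseq_def ratio_def using coeff_nonneg iter_pos
  by (auto intro!: secant_mono decseqD[OF decseq_iter] intro: less_imp_le)

lemma sum_gap: "l \<le> m \<Longrightarrow> (\<Sum>i\<in>{Suc l..m}. gap i) = iter l - iter m"
  by (induction m rule: dec_induct) (simp_all add: gap_Suc_eq)

lemma ex_gap_decrease: "\<exists>j\<ge>1. gap (Suc j) < gap j"
proof (rule ccontr)
  assume none: "\<not> ?thesis"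
  have rise: "gap 1 \<le> gap i" if "1 \<le> i" for i
    using that
  proof (induction i rule: dec_induct)
    case (step i)
    then show ?case using none by (auto simp: not_less intro: order_trans)
  qed simp
  obtain m where m: "1 < real m * gap 1"
    using ex_less_of_nat_mult gap_pos[of 1] by auto
  have "real m * gap 1 \<le> (\<Sum>i\<in>{Suc 0..m}. gap i)"
    using sum_bounded_below[of "{Suc 0..m}" "gap 1" gap] rise by simp
  also have "\<dots> = 1 - iter m"
    by (simp add: sum_gap)
  finally show False
    using m iter_pos[of m] by simp
qed

definition peak :: nat where
  "peak = (LEAST j. 1 \<le> j \<and> gap (Suc j) < gap j)"

lemma peak_ge1: "1 \<le> peak" and gap_Suc_peak_less: "gap (Suc peak) < gap peak"
  using LeastI_ex[OF ex_gap_decrease[unfolded Bex_def]] unfolding peak_def by auto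

lemma gap_mono_before_peak: "1 \<le> j \<Longrightarrow> j < peak \<Longrightarrow> gap j \<le> gap (Suc j)"
  using not_less_Least[of j "\<lambda>j. 1 \<le> j \<and> gap (Suc j) < gap j"] unfolding peak_def by auto

lemma ratio_peak_lt1: "ratio peak < 1"
  using gap_Suc_peak_less gap_Suc_ratio[OF peak_ge1] gap_pos[OF peak_ge1] by simp

lemma gap_decreasing_from_peak: "peak \<le> j \<Longrightarrow> gap (Suc j) < gap j"
proof -
  assume "peak \<le> j"
  then have "1 \<le> j" "ratio j < 1"
    using peak_ge1 ratio_peak_lt1 decseqD[OF decseq_ratio] by (auto intro: le_less_trans)
  then show ?thesis using gap_Suc_ratio gap_pos by simp
qed

lemma gap_rise_to_peak:
  assumes "1 \<le> l" "l \<le> i" "i \<le> peak"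
  shows "gap l \<le> gap i"
  using assms(2,3)
proof (induction i rule: dec_induct)
  case (step i)
  then show ?case using assms(1) gap_mono_before_peak[of i] by simp
qed simp

lemma peak_diff_lt:
  assumes "1 \<le> l" "l \<le> peak"
  shows "real (peak - l) < 1 / gap l"
proof -
  have "real (peak - l + 1) * gap l \<le> (\<Sum>i\<in>{Suc (l - 1)..peak}. gap i)"
    using sum_bounded_below[of "{Suc (l - 1)..peak}" "gap l" gap] assms gap_rise_to_peak
    by (simp add: Suc_diff_le)
  also have "\<dots> = iter (l - 1) - iter peak"
    using assms by (intro sum_gap) simp
  finally have "real (peak - l) * gap l + gap l \<le> 1"
    using iter_le1[of "l - 1"] iter_pos[of peak] by (simp add: algebra_simps)
  then show ?thesis
    using gap_pos[OF assms(1)] by (simp add: field_simps)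
qed

lemma gap_growth:
  assumes "0 \<le> A" "A < iter i" "1 \<le> i"
  shows "slope A A * gap i \<le> gap (Suc i)"
proof -
  have "slope A A \<le> ratio i"
    unfolding ratio_def using assms coeff_nonneg decseqD[OF decseq_iter, of "i - 1" i]
    by (intro secant_mono) auto
  then show ?thesis
    using gap_Suc_ratio[OF assms(3)] gap_pos[OF assms(3)] by simp
qed

lemma iter_peak_le:
  assumes "0 \<le> A" "1 \<le> slope A A"
  shows "iter peak \<le> A"
proof (rule ccontr)
  assume "\<not> iter peak \<le> A"
  then have "slope A A * gap peak \<le> gap (Suc peak)"
    using assms peak_ge1 by (intro gap_growth) auto
  moreover have "gap peak \<le> slope A A * gap peak"
    using assms gap_pos[OF peak_ge1] mult_right_mono[of 1 "slope A A" "gap peak"] by simp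
  ultimately show False
    using gap_Suc_peak_less by simp
qed

definition first_below :: "real \<Rightarrow> nat" where
  "first_below A = (LEAST i. iter i \<le> A)"

lemma
  assumes "0 \<le> A" "1 \<le> slope A A"
  shows first_below_le_peak: "first_below A \<le> peak"
    and iter_first_below_le: "iter (first_below A) \<le> A"
  using Least_le[of "\<lambda>i. iter i \<le> A"] LeastI[of "\<lambda>i. iter i \<le> A"] iter_peak_le[OF assms]
  unfolding first_below_def by auto

lemma iter_gt_before_first_below: "i < first_below A \<Longrightarrow> A < iter i"
  using not_less_Least[of i "\<lambda>i. iter i \<le> A"] unfolding first_below_def by simp

lemma first_below_ge1:
  assumes "0 \<le> A" "A < 1" "1 \<le> slope A A"
  shows "1 \<le> first_below A"
  using iter_first_below_le[of A] assms by (cases "first_below A") simp_all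

lemma displacement_ge:
  assumes "0 \<le> A" "A \<le> x" "x \<le> 1"
  shows "(1 - x) * (slope A A - 1) \<le> x - f x"
proof -
  have "slope A A \<le> slope x 1"
    using assms coeff_nonneg by (intro secant_mono) auto
  then have "(1 - x) * slope A A \<le> f 1 - f x"
    using pgf_diff[of d a 1 x] assms by (simp add: mult_left_mono mult.commute)
  then show ?thesis
    using f_lt1[of 1] by (simp add: algebra_simps)
qed

lemma gap_first_below_ge:
  assumes A: "0 \<le> A" "A < 1" and slope: "1 \<le> slope A A"
  shows "(1 - A) / 2 * min (slope A A - 1) 1 \<le> gap (first_below A)"
proof -
  define l where "l = first_below A"
  define x where "x = iter (l - 1)"
  have l: "1 \<le> l"
    unfolding l_def using first_below_ge1 A slope .
  then have gap_l: "gap l = x - f x" and fx: "f x \<le> A"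
    using iter_first_below_le[OF A(1) slope] iter_Suc[of "l - 1"]
    unfolding l_def x_def gap_def by simp_all
  have x: "A < x" "x \<le> 1"
    unfolding x_def l_def using iter_gt_before_first_below l iter_le1 by (simp_all add: l_def)
  show ?thesis
  proof (cases "x \<le> (1 + A) / 2")
    case True
    have "(1 - A) / 2 * min (slope A A - 1) 1 \<le> (1 - x) * (slope A A - 1)"
      using True slope A by (intro mult_mono) auto
    also have "\<dots> \<le> gap l"
      unfolding gap_l using A x by (intro displacement_ge) auto
    finally show ?thesis by (simp add: l_def)
  next
    case False
    have "(1 - A) / 2 * min (slope A A - 1) 1 \<le> (1 - A) / 2"
      using A mult_left_mono[of "min (slope A A - 1) 1" 1 "(1 - A) / 2"] by simp
    also have "\<dots> \<le> gap l"
      using False gap_l fx by simp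
    finally show ?thesis by (simp add: l_def)
  qed
qed

lemma ratio_tail:
  assumes "peak + 2 \<le> i"
  shows "ratio i \<le> 1 - a j0 * gap peak ^ (j0 - 1)"
proof -
  define y where "y = iter (peak - 1)"
  define y' where "y' = iter (Suc peak)"
  have y: "y = y' + gap peak + gap (Suc peak)"
    unfolding y_def y'_def gap_def by simp
  have y': "0 \<le> y'" "y' \<le> iter peak" "iter peak \<le> y"
    unfolding y_def y'_def using iter_pos decseqD[OF decseq_iter] by (auto intro: less_imp_le)
  have "y' ^ (j0 - 1) + gap peak ^ (j0 - 1) \<le> (y' + gap peak) ^ (j0 - 1)"
    using y' gap_pos[OF peak_ge1] j0 by (intro power_add_ge_add_power) auto
  also have "\<dots> \<le> y ^ (j0 - 1)"
    using y y' gap_pos[of "Suc peak"] gap_pos[OF peak_ge1] by (intro power_mono) auto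
  finally have "a j0 * gap peak ^ (j0 - 1) \<le> a j0 * (y ^ (j0 - 1) - y' ^ (j0 - 1))"
    using j0 by (intro mult_left_mono) auto
  also have "\<dots> \<le> ratio peak - slope y' y'"
    unfolding ratio_def y_def[symmetric] using y' coeff_nonneg j0
    by (intro secant_increase_ge) auto
  also have "\<dots> \<le> 1 - ratio i"
  proof -
    have "ratio i \<le> slope y' y'"
      unfolding ratio_def y'_def using assms iter_pos coeff_nonneg decseqD[OF decseq_iter]
      by (intro secant_mono) (auto intro: less_imp_le)
    then show ?thesis using ratio_peak_lt1 by simp
  qed
  finally show ?thesis by simp
qed

lemma tail_sum_le:
  assumes i: "peak + 2 \<le> i" and \<kappa>: "0 < \<kappa>" "\<kappa> \<le> gap peak"
  shows "(\<Sum>k. gap (i + k)) \<le> gap i / (a j0 * \<kappa> ^ (j0 - 1))"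
proof -
  define \<delta> where "\<delta> = a j0 * \<kappa> ^ (j0 - 1)"
  have "\<delta> \<le> a j0 * gap peak ^ (j0 - 1)"
    unfolding \<delta>_def using \<kappa> j0 by (intro mult_left_mono power_mono) auto
  then have ratio_le: "ratio j \<le> 1 - \<delta>" if "peak + 2 \<le> j" for j
    using ratio_tail[OF that] by simp
  have "0 < \<delta>"
    unfolding \<delta>_def using j0 \<kappa> by simp
  moreover have "0 \<le> 1 - \<delta>"
    using ratio_le[OF i] ratio_pos[of i] by simp
  moreover have "gap (i + Suc k) \<le> (1 - \<delta>) * gap (i + k)" for k
  proof -
    have "1 \<le> i + k" "peak + 2 \<le> i + k" using i by auto
    then show ?thesis
      using gap_Suc_ratio[of "i + k"] ratio_le gap_pos[of "i + k"] by (simp add: mult_right_mono)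
  qed
  moreover have "0 \<le> gap (i + k)" for k
    using gap_pos[of "i + k"] i by simp
  ultimately show ?thesis
    using suminf_le_geometric(2)[of "\<lambda>k. gap (i + k)" "1 - \<delta>"] unfolding \<delta>_def by simp
qed

lemma gap_profile:
  assumes A: "0 \<le> A" "A < 1" and \<rho>: "1 < \<rho>" "\<rho> \<le> slope A A"
    and \<kappa>: "0 < \<kappa>" "\<kappa> \<le> (1 - A) / 2 * min (\<rho> - 1) 1"
    and K: "1 / \<kappa> \<le> real K" and \<gamma>: "1 / (a j0 * \<kappa> ^ (j0 - 1)) \<le> \<gamma>"
  shows "\<exists>l1 ls::nat. 1 \<le> l1 \<and> l1 \<le> ls
      \<and> (\<forall>i. 2 \<le> i \<and> i \<le> ls \<longrightarrow> gap (i - 1) \<le> gap i)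
      \<and> (\<forall>j\<ge>ls. gap j > gap (j + 1))
      \<and> (\<forall>i. 1 \<le> i \<and> i < l1 \<longrightarrow> gap (i + 1) \<ge> \<rho> * gap i)
      \<and> gap l1 \<ge> \<kappa>
      \<and> ls - l1 \<le> K
      \<and> (\<forall>i\<ge>ls + 2. (\<Sum>k. gap (i + k)) \<le> \<gamma> * gap i)"
proof (intro exI conjI allI impI)
  define l1 where "l1 = first_below A"
  have slope: "1 \<le> slope A A" using \<rho> by simp
  show l1: "1 \<le> l1" "l1 \<le> peak"
    unfolding l1_def using first_below_ge1 first_below_le_peak A slope by simp_all
  show gap_l1: "\<kappa> \<le> gap l1"
  proof -
    have "(1 - A) / 2 * min (\<rho> - 1) 1 \<le> (1 - A) / 2 * min (slope A A - 1) 1"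
      using \<rho> A by (intro mult_left_mono) auto
    then show ?thesis
      using \<kappa> gap_first_below_ge[OF A slope] unfolding l1_def by linarith
  qed
  show "gap (i - 1) \<le> gap i" if "2 \<le> i \<and> i \<le> peak" for i
  proof -
    have "1 \<le> i - 1" "i - 1 < peak" "Suc (i - 1) = i" using that by auto
    then show ?thesis using gap_mono_before_peak[of "i - 1"] by simp
  qed
  show "gap j > gap (j + 1)" if "peak \<le> j" for j
    using gap_decreasing_from_peak that by simp
  show "\<rho> * gap i \<le> gap (i + 1)" if "1 \<le> i \<and> i < l1" for i
  proof -
    have "\<rho> * gap i \<le> slope A A * gap i"
      using \<rho> gap_pos[of i] that by (intro mult_right_mono) auto
    also have "\<dots> \<le> gap (Suc i)"
      using that gap_growth[of A i] iter_gt_before_first_below[of i A] A unfolding l1_def by simp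
    finally show ?thesis by simp
  qed
  show "peak - l1 \<le> K"
  proof -
    have "real (peak - l1) < 1 / gap l1"
      using peak_diff_lt[OF l1] .
    also have "\<dots> \<le> 1 / \<kappa>"
      using gap_l1 \<kappa> by (intro divide_left_mono) auto
    finally show ?thesis using K by linarith
  qed
  show "(\<Sum>k. gap (i + k)) \<le> \<gamma> * gap i" if "peak + 2 \<le> i" for i
  proof -
    have "(\<Sum>k. gap (i + k)) \<le> 1 / (a j0 * \<kappa> ^ (j0 - 1)) * gap i"
      using tail_sum_le[OF that \<kappa>(1)] gap_l1 gap_rise_to_peak[OF l1(1) l1(2)] by simp
    also have "\<dots> \<le> \<gamma> * gap i"
      using \<gamma> gap_pos[of i] that by (intro mult_right_mono) auto
    finally show ?thesis .
  qed
qed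

end

definition thinned :: "(nat \<Rightarrow> real) \<Rightarrow> nat \<Rightarrow> nat \<Rightarrow> real" where
  "thinned c n j = c j * (1 - 1 / real n) ^ j"

lemma tfun_eq_pgf_thinned: "tfun d c n = pgf d (thinned c n)"
  by (simp add: fun_eq_iff tfun_def pgf_def thinned_def power_mult_distrib mult_ac)

lemma lam_eq_gap:
  assumes "defective_pgf_iteration d (thinned c n) j0"
  shows "lam d c n = defective_pgf_iteration.gap d (thinned c n)"
  using defective_pgf_iteration.gap_def[OF assms] defective_pgf_iteration.iter_def[OF assms]
  by (simp add: fun_eq_iff lam_def phi_def tfun_eq_pgf_thinned)

lemma defective_pgf_iteration_thinned:
  assumes nonneg: "\<forall>i\<le>d. 0 \<le> c i" and distr: "(\<Sum>i\<le>d. c i) = 1"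
    and j0: "2 \<le> j0" "j0 \<le> d" "0 < c j0" and n: "2 \<le> n"
  shows "defective_pgf_iteration d (thinned c n) j0"
proof
  define q where "q = 1 - 1 / real n"
  have q: "0 < q" "q < 1"
    using n by (auto simp: q_def)
  have thinned_q: "thinned c n j = c j * q ^ j" for j
    by (simp add: thinned_def q_def)
  show "\<forall>j\<le>d. 0 \<le> thinned c n j" "0 < thinned c n j0"
    using nonneg j0 q by (simp_all add: thinned_q)
  show "2 \<le> j0" "j0 \<le> d" by (fact j0)+
  have "0 < c j0 * (1 - q ^ j0)"
    using j0 q by (simp add: power_less_one_iff)
  also have "\<dots> \<le> (\<Sum>j\<le>d. c j * (1 - q ^ j))"
    using j0 nonneg q by (intro member_le_sum) (auto intro!: mult_nonneg_nonneg simp: power_le_one)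
  also have "\<dots> = 1 - (\<Sum>j\<le>d. thinned c n j)"
    using distr by (simp add: thinned_q algebra_simps sum_subtractf)
  finally show "(\<Sum>j\<le>d. thinned c n j) < 1" by simp
qed

lemma supercritical_multiple_offspring:
  assumes nonneg: "\<forall>i\<le>d. 0 \<le> c i" and distr: "(\<Sum>i\<le>d. c i) = 1"
    and supercrit: "1 < branching d c"
  obtains j where "2 \<le> j" "j \<le> d" "0 < c j"
proof -
  have "\<exists>j. 2 \<le> j \<and> j \<le> d \<and> 0 < c j"
  proof (rule ccontr)
    assume none: "\<not> ?thesis"
    have "real i * c i \<le> c i" if "i \<le> d" for i
    proof (cases "2 \<le> i")
      case True
      then have "c i = 0" using none nonneg that by force
      then show ?thesis by simp
    next
      case False
      then show ?thesis using nonneg that by (intro mult_left_le_one_le) auto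
    qed
    then have "branching d c \<le> (\<Sum>i\<le>d. c i)"
      unfolding branching_def by (intro sum_mono) auto
    then show False using distr supercrit by simp
  qed
  then show thesis using that by blast
qed

lemma secant_thinned_diag_ge:
  assumes nonneg: "\<forall>i\<le>d. 0 \<le> c i" and "1 \<le> n" "0 \<le> x" "x \<le> 1"
  shows "((1 - 1 / real n) * x) ^ d * branching d c \<le> secant d (thinned c n) x x"
proof -
  define q where "q = 1 - 1 / real n"
  have q: "0 \<le> q" "q \<le> 1"
    using assms by (auto simp: q_def)
  have "(q * x) ^ d \<le> q ^ j * x ^ (j - 1)" if "1 \<le> j" "j \<le> d" for j
  proof -
    have "(q * x) ^ d \<le> (q * x) ^ j"
      using q assms that by (intro power_decreasing) (auto intro: mult_le_one)
    also have "\<dots> \<le> q ^ j * x ^ (j - 1)"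
      unfolding power_mult_distrib using q assms that
      by (intro mult_left_mono power_decreasing) auto
    finally show ?thesis .
  qed
  then have "real j * c j * (q * x) ^ d \<le> real j * thinned c n j * x ^ (j - 1)" if "j \<le> d" for j
    using nonneg that
    by (cases "j = 0") (auto simp: thinned_def q_def[symmetric] mult.assoc intro!: mult_left_mono)
  then have "(q * x) ^ d * branching d c \<le> (\<Sum>j\<le>d. real j * thinned c n j * x ^ (j - 1))"
    unfolding branching_def sum_distrib_left by (intro sum_mono) (simp add: mult_ac)
  then show ?thesis
    by (simp add: secant_diag q_def)
qed

text \<open>Choosing \<open>1 - A\<close> and \<open>1 / n\<close> of order \<open>(b - 1) / (b d)\<close> keeps
  \<open>b ((1 - 1/n) A)\<^sup>d\<close>, by Bernoulli's inequality, above the midpoint of \<open>1\<close> and \<open>b\<close>.\<close>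

lemma eventually_secant_thinned_ge:
  assumes nonneg: "\<forall>i\<le>d. 0 \<le> c i" and supercrit: "1 < branching d c"
  obtains A where "0 < A" "A < 1"
    "\<forall>\<^sub>F n in sequentially. (branching d c + 1) / 2 \<le> secant d (thinned c n) A A"
proof -
  define b where "b = branching d c"
  have b: "1 < b" using supercrit by (simp add: b_def)
  have d: "1 \<le> real d"
    using supercrit by (cases d) (auto simp: branching_def)
  define e where "e = (b - 1) / (4 * b * real d)"
  have "b * 1 \<le> b * (4 * real d)"
    using b d by (intro mult_left_mono) auto
  then have "b - 1 < 4 * b * real d"
    by simp
  then have e: "0 < e" "e < 1"
    using b d by (auto simp: e_def pos_divide_less_eq)
  have "(b + 1) / 2 \<le> secant d (thinned c n) (1 - e) (1 - e)" if n: "1 / e \<le> real n" for n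
  proof -
    define q where "q = 1 - 1 / real n"
    have n1: "1 \<le> n"
      using n e by (cases n) (auto simp: field_simps)
    have "1 - q \<le> e"
      using n e n1 by (simp add: q_def field_simps)
    moreover have "q * e \<le> e"
      using e by (simp add: q_def)
    ultimately have "real d * (1 - q * (1 - e)) \<le> real d * (2 * e)"
      by (intro mult_left_mono) (auto simp: algebra_simps)
    also have "\<dots> = (b - 1) / (2 * b)"
      using d b by (simp add: e_def field_simps)
    moreover have "1 + real d * (q * (1 - e) - 1) \<le> (q * (1 - e)) ^ d"
      using Bernoulli_inequality[of "q * (1 - e) - 1" d] n1 e by (simp add: q_def)
    ultimately have "1 - (b - 1) / (2 * b) \<le> (q * (1 - e)) ^ d"
      by (simp add: algebra_simps)
    then have "(b + 1) / 2 \<le> (q * (1 - e)) ^ d * b"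
      using b by (simp add: field_simps)
    also have "\<dots> \<le> secant d (thinned c n) (1 - e) (1 - e)"
      unfolding b_def q_def using nonneg n1 e by (intro secant_thinned_diag_ge) auto
    finally show ?thesis .
  qed
  moreover obtain N where "1 / e \<le> real N"
    using real_arch_simple by blast
  ultimately have "\<forall>\<^sub>F n in sequentially. (b + 1) / 2 \<le> secant d (thinned c n) (1 - e) (1 - e)"
    by (intro eventually_sequentiallyI[of N]) auto
  then show thesis
    using that[of "1 - e"] e by (simp add: b_def)
qed

theorem lemma3p1:
  fixes d :: nat and c :: "nat \<Rightarrow> real"
  assumes nonneg: "\<forall>i\<le>d. c i \<ge> 0"
    and distr: "(\<Sum>i\<le>d. c i) = 1"
    and supercrit: "branching d c > 1"
  shows "\<exists>\<rho>>1. \<exists>\<gamma>>1. \<exists>\<kappa>>0. \<exists>K::nat.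
    \<forall>\<^sub>F n in sequentially. \<exists>l1 ls::nat. 1 \<le> l1 \<and> l1 \<le> ls
      \<and> (\<forall>i. 2 \<le> i \<and> i \<le> ls \<longrightarrow> lam d c n (i - 1) \<le> lam d c n i)
      \<and> (\<forall>j\<ge>ls. lam d c n j > lam d c n (j + 1))
      \<and> (\<forall>i. 1 \<le> i \<and> i < l1 \<longrightarrow> lam d c n (i + 1) \<ge> \<rho> * lam d c n i)
      \<and> lam d c n l1 \<ge> \<kappa>
      \<and> ls - l1 \<le> K
      \<and> (\<forall>i\<ge>ls + 2. (\<Sum>k. lam d c n (i + k)) \<le> \<gamma> * lam d c n i)"
proof -
  obtain j0 where offspring: "2 \<le> j0" "j0 \<le> d" "0 < c j0"
    using supercritical_multiple_offspring[OF nonneg distr supercrit] .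
  define \<rho> where "\<rho> = (branching d c + 1) / 2"
  obtain A where A: "0 < A" "A < 1" and slope: "\<forall>\<^sub>F n in sequentially. \<rho> \<le> secant d (thinned c n) A A"
    using eventually_secant_thinned_ge[OF nonneg supercrit] unfolding \<rho>_def by blast
  define \<kappa> where "\<kappa> = (1 - A) / 2 * min (\<rho> - 1) 1"
  define \<gamma> where "\<gamma> = 1 + 2 ^ j0 / (c j0 * \<kappa> ^ (j0 - 1))"
  have \<rho>: "1 < \<rho>" and \<kappa>: "0 < \<kappa>" and \<gamma>: "1 < \<gamma>"
    using supercrit A offspring by (simp_all add: \<rho>_def \<kappa>_def \<gamma>_def)
  show ?thesis
    apply (rule exI[of _ \<rho>], rule conjI[OF \<rho>], rule exI[of _ \<gamma>], rule conjI[OF \<gamma>],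
        rule exI[of _ \<kappa>], rule conjI[OF \<kappa>], rule exI[of _ "nat \<lceil>1 / \<kappa>\<rceil>"])
    using slope eventually_ge_at_top[of 2]
  proof eventually_elim
    case (elim n)
    then interpret defective_pgf_iteration d "thinned c n" j0
      using defective_pgf_iteration_thinned[OF nonneg distr offspring] by simp
    have "c j0 * (1 / 2) ^ j0 \<le> thinned c n j0"
      unfolding thinned_def using elim offspring by (intro mult_left_mono power_mono) auto
    then have "1 / (thinned c n j0 * \<kappa> ^ (j0 - 1)) \<le> 1 / (c j0 * (1 / 2) ^ j0 * \<kappa> ^ (j0 - 1))"
      using offspring \<kappa> j0 by (intro divide_left_mono mult_right_mono mult_pos_pos) auto
    also have "\<dots> \<le> \<gamma>"
      by (simp add: \<gamma>_def power_one_over)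
    finally have "1 / (thinned c n j0 * \<kappa> ^ (j0 - 1)) \<le> \<gamma>" .
    then show ?case
      unfolding lam_eq_gap[OF defective_pgf_iteration_axioms]
      using A \<rho> \<kappa> elim by (intro gap_profile) (auto simp: \<kappa>_def)
  qed
qed

end
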